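(* Let $F$ be a field of characteristic $2$, let $i\le n$ be positive integers, let $X_1,\dots,X_{i-1},Y_i,\dots,Y_n,Z_i,\dots,Z_n$ be indeterminates, and let $K=F(X_1,\dots,X_{i-1},Y_i,\dots,Y_n,Z_i,\dots,Z_n)$. Then $$\mathfrak b:=\langle\langle X_1,\dots,X_{i-1}\rangle\rangle_b\otimes\big(\langle\langle Y_i,\dots,Y_n\rangle\rangle_b'\perp\langle\langle Z_i,\dots,Z_n\rangle\rangle_b'\big)$$ is an anisotropic symmetric bilinear form over $K$ of dimension $2^{n+1}-2^i$ with $[\mathfrak b]\in I^n(K)$.
   Context: $\langle\langle a_1,\dots,a_m\rangle\rangle_b=\langle1,a_1\rangle_b\otimes\cdots\otimes\langle1,a_m\rangle_b$ is the $m$-fold bilinear Pfister form, i.e. $\perp_{S\subseteq\{1,\dots,m\}}\langle\prod_{j\in S}a_j\rangle_b$; its pure part $\langle\langle a_1,\dots,a_m\rangle\rangle_b'$ (for $m\ge1$) is $\perp_{\emptyset\ne S\subseteq\{1,\dots,m\}}\langle\prod_{j\in S}a_j\rangle_b$, the complement of $\langle1\rangle_b$. $W(K)$ is the Witt ring of (non-degenerate) symmetric bilinear forms, $I(K)$ its fundamental ideal and $I^n(K)$ its $n$-th power; a form is anisotropic if $\mathfrak b(v,v)\ne0$ for $v\ne0$. *)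

theory Defs
  imports Main "HOL-Library.Poly_Mapping"
begin

definition subfield :: "'k::field set \<Rightarrow> bool" where
  "subfield F \<longleftrightarrow> 0 \<in> F \<and> 1 \<in> F \<and>
     (\<forall>a\<in>F. \<forall>b\<in>F. a + b \<in> F \<and> a - b \<in> F \<and> a * b \<in> F) \<and>
     (\<forall>a\<in>F. inverse a \<in> F)"

text \<open>Multivariate polynomials in variables of type 'v: finitely supported maps from
  monomials (finitely supported exponent vectors) to coefficients.\<close>

type_synonym ('v, 'k) mpoly = "('v \<Rightarrow>\<^sub>0 nat) \<Rightarrow>\<^sub>0 'k"

definition mpoly_over :: "'k set \<Rightarrow> 'v set \<Rightarrow> ('v, 'k::field) mpoly \<Rightarrow> bool" where
  "mpoly_over F V p \<longleftrightarrow> (\<forall>m. Poly_Mapping.lookup p m \<in> F) \<and>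
     (\<forall>m. Poly_Mapping.lookup p m \<noteq> 0 \<longrightarrow> (\<forall>v. Poly_Mapping.lookup m v \<noteq> 0 \<longrightarrow> v \<in> V))"

definition mpoly_eval :: "('v \<Rightarrow> 'k::field) \<Rightarrow> ('v, 'k) mpoly \<Rightarrow> 'k" where
  "mpoly_eval g p = (\<Sum>m\<in>Poly_Mapping.keys p. Poly_Mapping.lookup p m * (\<Prod>v\<in>Poly_Mapping.keys m. g v ^ Poly_Mapping.lookup m v))"

text \<open>The whole field 'k equals F(g v | v \<in> V), with the g v (v \<in> V) algebraically
  independent over F; i.e. 'k is the rational function field over F in the indeterminates
  indexed by V.\<close>

definition rational_function_field :: "'k::field set \<Rightarrow> ('v \<Rightarrow> 'k) \<Rightarrow> 'v set \<Rightarrow> bool" where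
  "rational_function_field F g V \<longleftrightarrow> subfield F \<and>
     (\<forall>p. mpoly_over F V p \<and> mpoly_eval g p = 0 \<longrightarrow> p = 0) \<and>
     (\<forall>x::'k. \<exists>p q. mpoly_over F V p \<and> mpoly_over F V q \<and> mpoly_eval g q \<noteq> 0 \<and>
                    x = mpoly_eval g p / mpoly_eval g q)"

datatype var = VX nat | VY nat | VZ nat

definition gens :: "(nat \<Rightarrow> 'k) \<Rightarrow> (nat \<Rightarrow> 'k) \<Rightarrow> (nat \<Rightarrow> 'k) \<Rightarrow> var \<Rightarrow> 'k" where
  "gens X Y Z v = (case v of VX j \<Rightarrow> X j | VY j \<Rightarrow> Y j | VZ j \<Rightarrow> Z j)"

definition vars :: "nat \<Rightarrow> nat \<Rightarrow> var set" where
  "vars i n = VX ` {1..<i} \<union> VY ` {i..n} \<union> VZ ` {i..n}"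

text \<open>A form is (m, B): dimension m and Gram matrix B (only entries with indices < m matter).\<close>
type_synonym 'k bform = "nat \<times> (nat \<Rightarrow> nat \<Rightarrow> 'k)"

definition bil :: "'k bform \<Rightarrow> (nat \<Rightarrow> 'k) \<Rightarrow> (nat \<Rightarrow> 'k) \<Rightarrow> 'k::field" where
  "bil f v w = (\<Sum>a<fst f. \<Sum>b<fst f. v a * snd f a b * w b)"

definition nonzero_vec :: "nat \<Rightarrow> (nat \<Rightarrow> 'k::zero) \<Rightarrow> bool" where
  "nonzero_vec m v \<longleftrightarrow> (\<exists>a<m. v a \<noteq> 0)"

definition sym_nondeg :: "'k::field bform \<Rightarrow> bool" where
  "sym_nondeg f \<longleftrightarrow> (\<forall>a<fst f. \<forall>b<fst f. snd f a b = snd f b a) \<and>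
     (\<forall>v. nonzero_vec (fst f) v \<longrightarrow> (\<exists>w. bil f v w \<noteq> 0))"

definition anisotropic :: "'k::field bform \<Rightarrow> bool" where
  "anisotropic f \<longleftrightarrow> (\<forall>v. nonzero_vec (fst f) v \<longrightarrow> bil f v v \<noteq> 0)"

definition orth :: "'k::field bform \<Rightarrow> 'k bform \<Rightarrow> 'k bform" where
  "orth f g = (fst f + fst g, \<lambda>a b. if a < fst f \<and> b < fst f then snd f a b
       else if fst f \<le> a \<and> fst f \<le> b then snd g (a - fst f) (b - fst f) else 0)"

definition tensor :: "'k::field bform \<Rightarrow> 'k bform \<Rightarrow> 'k bform" where
  "tensor f g = (fst f * fst g, \<lambda>a b. snd f (a div fst g) (b div fst g) * snd g (a mod fst g) (b mod fst g))"

definition negf :: "'k::field bform \<Rightarrow> 'k bform" where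
  "negf f = (fst f, \<lambda>a b. - snd f a b)"

definition diagf :: "'k::field list \<Rightarrow> 'k bform" where
  "diagf xs = (length xs, \<lambda>a b. if a = b \<and> a < length xs then xs ! a else 0)"

definition zerof :: "'k::field bform" where
  "zerof = (0, \<lambda>_ _. 0)"

text \<open>Bilinear Pfister form <<a1,...,am>>_b = <1,a1>_b \<otimes> ... \<otimes> <1,am>_b, and its pure part
  (orthogonal complement of the first basis vector, whose value is 1).\<close>

definition pfister :: "'k::field list \<Rightarrow> 'k bform" where
  "pfister as = foldr (\<lambda>a f. tensor (diagf [1, a]) f) as (diagf [1])"

definition pure_pfister :: "'k::field list \<Rightarrow> 'k bform" where
  "pure_pfister as = (fst (pfister as) - 1, \<lambda>a b. snd (pfister as) (Suc a) (Suc b))"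

definition isometric :: "'k::field bform \<Rightarrow> 'k bform \<Rightarrow> bool" where
  "isometric f g \<longleftrightarrow> fst f = fst g \<and> (\<exists>P Q.
     (\<forall>a<fst f. \<forall>b<fst f. (\<Sum>c<fst f. P a c * Q c b) = (if a = b then 1 else 0)) \<and>
     (\<forall>a<fst f. \<forall>b<fst f. snd g a b = (\<Sum>c<fst f. \<Sum>d<fst f. P c a * snd f c d * P d b)))"

definition metabolic :: "'k::field bform \<Rightarrow> bool" where
  "metabolic f \<longleftrightarrow> sym_nondeg f \<and> (\<exists>k ws. 2 * k = fst f \<and>
     (\<forall>c. (\<forall>j<fst f. (\<Sum>a<k. c a * ws a j) = 0) \<longrightarrow> (\<forall>a<k. c a = 0)) \<and>
     (\<forall>a<k. \<forall>b<k. bil f (ws a) (ws b) = 0))"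

definition witt_eq :: "'k::field bform \<Rightarrow> 'k bform \<Rightarrow> bool" where
  "witt_eq f g \<longleftrightarrow> sym_nondeg f \<and> sym_nondeg g \<and>
     (\<exists>M1 M2. metabolic M1 \<and> metabolic M2 \<and> isometric (orth f M1) (orth g M2))"

text \<open>[f] \<in> I^n(K): the class of f lies in the additive subgroup of W(K) generated by
  products of n classes from I(K) (= classes of even-dimensional forms).  A generator
  with sign True enters negatively.\<close>
definition in_I_pow :: "nat \<Rightarrow> 'k::field bform \<Rightarrow> bool" where
  "in_I_pow n f \<longleftrightarrow> (\<exists>gs :: (bool \<times> 'k bform list) list.
     (\<forall>(s, fs) \<in> set gs. length fs = n \<and> (\<forall>c\<in>set fs. sym_nondeg c \<and> even (fst c))) \<and>
     witt_eq f (foldr orth (map (\<lambda>(s, fs). (if s then negf else id) (foldr tensor fs (diagf [1]))) gs) zerof))"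

end

theory Submission
  imports Defs "HOL-Combinatorics.List_Permutation"
begin

text \<open>All forms involved are diagonal, and the diagonal entries of \<open>b\<close> are the monomials
  \<open>\<Prod>x\<in>S. x\<close> for pairwise distinct sets \<open>S\<close> of indeterminates: a subset of the
  \<open>X\<close>'s together with a nonempty subset of the \<open>Y\<close>'s or of the \<open>Z\<close>'s.  Suppose
  \<open>\<Sum>S. v S ^ 2 * (\<Prod>x\<in>S. x) = 0\<close> and clear denominators.  Since squaring is additive
  in characteristic 2, every monomial in the \<open>S\<close>-th summand has an exponent vector whose odd
  coordinates are exactly \<open>S\<close>; so the summands have disjoint supports, and algebraic
  independence forces every \<open>v S = 0\<close>.

  For the Witt class, \<open>\<langle>\<langle>Y\<rangle>\<rangle> = \<langle>1\<rangle> \<perp> \<langle>\<langle>Y\<rangle>\<rangle>'\<close> shows that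
  \<open>b \<perp> \<langle>\<langle>X\<rangle>\<rangle> \<perp> \<langle>\<langle>X\<rangle>\<rangle>\<close> and \<open>\<langle>\<langle>X,Y\<rangle>\<rangle> \<perp> \<langle>\<langle>X,Z\<rangle>\<rangle>\<close> have the
  same diagonal entries, while \<open>\<langle>\<langle>X\<rangle>\<rangle> \<perp> \<langle>\<langle>X\<rangle>\<rangle>\<close> is metabolic in characteristic 2.
  Hence \<open>[b]\<close> is a sum of two \<open>n\<close>-fold Pfister forms.\<close>

section \<open>Polynomial values in a rational function field\<close>

definition mon_eval :: "('v \<Rightarrow> 'k::field) \<Rightarrow> ('v \<Rightarrow>\<^sub>0 nat) \<Rightarrow> 'k" where
  "mon_eval g m = (\<Prod>v\<in>Poly_Mapping.keys m. g v ^ Poly_Mapping.lookup m v)"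

lemma mon_eval_superset:
  assumes "finite A" "Poly_Mapping.keys m \<subseteq> A"
  shows "mon_eval g m = (\<Prod>v\<in>A. g v ^ Poly_Mapping.lookup m v)"
  unfolding mon_eval_def using assms
  by (intro prod.mono_neutral_left) (auto simp: in_keys_iff)

lemma mon_eval_add: "mon_eval g (m + m') = mon_eval g m * mon_eval g m'"
proof -
  let ?A = "Poly_Mapping.keys m \<union> Poly_Mapping.keys m'"
  have "Poly_Mapping.keys (m + m') \<subseteq> ?A" by (simp add: keys_add)
  then show ?thesis
    using mon_eval_superset[of ?A _ g]
    by (simp add: lookup_add power_add prod.distrib)
qed

lemma mon_eval_0: "mon_eval g 0 = 1"
  by (simp add: mon_eval_def)

lemma mpoly_eval_superset:
  assumes "finite A" "Poly_Mapping.keys p \<subseteq> A"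
  shows "mpoly_eval g p = (\<Sum>m\<in>A. Poly_Mapping.lookup p m * mon_eval g m)"
  unfolding mpoly_eval_def mon_eval_def[symmetric] using assms
  by (intro sum.mono_neutral_left) (auto simp: in_keys_iff)

lemma mpoly_eval_add: "mpoly_eval g (p + q) = mpoly_eval g p + mpoly_eval g q"
proof -
  let ?A = "Poly_Mapping.keys p \<union> Poly_Mapping.keys q"
  have "Poly_Mapping.keys (p + q) \<subseteq> ?A" by (simp add: keys_add)
  then show ?thesis
    using mpoly_eval_superset[of ?A _ g]
    by (simp add: lookup_add distrib_right sum.distrib)
qed

lemma mpoly_eval_0: "mpoly_eval g 0 = 0"
  by (simp add: mpoly_eval_def)

lemma mpoly_eval_single: "mpoly_eval g (Poly_Mapping.single m c) = c * mon_eval g m"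
  using mpoly_eval_superset[of "{m}" "Poly_Mapping.single m c" g] by simp

lemma mpoly_eval_sum:
  "finite I \<Longrightarrow> mpoly_eval g (\<Sum>i\<in>I. p i) = (\<Sum>i\<in>I. mpoly_eval g (p i))"
  by (induct I rule: finite_induct) (auto simp: mpoly_eval_0 mpoly_eval_add)

lemma mpoly_over_0: "subfield F \<Longrightarrow> mpoly_over F V 0"
  by (simp add: mpoly_over_def subfield_def)

lemma mpoly_over_add:
  "subfield F \<Longrightarrow> mpoly_over F V p \<Longrightarrow> mpoly_over F V q \<Longrightarrow> mpoly_over F V (p + q)"
  unfolding mpoly_over_def subfield_def
  by (metis add.right_neutral lookup_add)

lemma mpoly_over_single:
  "subfield F \<Longrightarrow> c \<in> F \<Longrightarrow> (\<forall>v. Poly_Mapping.lookup m v \<noteq> 0 \<longrightarrow> v \<in> V)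
   \<Longrightarrow> mpoly_over F V (Poly_Mapping.single m c)"
  unfolding mpoly_over_def subfield_def
  by (auto simp: lookup_single when_def)

lemma mpoly_over_sum:
  "finite I \<Longrightarrow> subfield F \<Longrightarrow> (\<forall>i\<in>I. mpoly_over F V (p i)) \<Longrightarrow> mpoly_over F V (\<Sum>i\<in>I. p i)"
  by (induct I rule: finite_induct) (auto simp: mpoly_over_0 mpoly_over_add)

definition poly_value :: "'k::field set \<Rightarrow> 'v set \<Rightarrow> ('v \<Rightarrow> 'k) \<Rightarrow> 'k \<Rightarrow> bool" where
  "poly_value F V g x \<longleftrightarrow> (\<exists>p. mpoly_over F V p \<and> mpoly_eval g p = x)"

lemma poly_value_sum_monomials:
  assumes F: "subfield F" and I: "finite I"
    and "\<forall>i\<in>I. c i \<in> F \<and> (\<forall>v. Poly_Mapping.lookup (m i) v \<noteq> 0 \<longrightarrow> v \<in> V)"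
  shows "poly_value F V g (\<Sum>i\<in>I. c i * mon_eval g (m i))"
  unfolding poly_value_def
  using assms
  by (intro exI[of _ "\<Sum>i\<in>I. Poly_Mapping.single (m i) (c i)"])
     (simp add: mpoly_eval_sum mpoly_eval_single mpoly_over_sum mpoly_over_single)

lemma poly_value_mult:
  assumes F: "subfield F" and "poly_value F V g x" and "poly_value F V g y"
  shows "poly_value F V g (x * y)"
proof -
  obtain p where p: "mpoly_over F V p" "mpoly_eval g p = x"
    using \<open>poly_value F V g x\<close> poly_value_def by blast
  obtain q where q: "mpoly_over F V q" "mpoly_eval g q = y"
    using \<open>poly_value F V g y\<close> poly_value_def by blast
  have "x * y = (\<Sum>m\<in>Poly_Mapping.keys p. Poly_Mapping.lookup p m * mon_eval g m) *
                (\<Sum>m\<in>Poly_Mapping.keys q. Poly_Mapping.lookup q m * mon_eval g m)"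
    using p(2) q(2) mpoly_eval_superset[of "Poly_Mapping.keys p" p g]
      mpoly_eval_superset[of "Poly_Mapping.keys q" q g]
    by simp
  also have "\<dots> = (\<Sum>mm\<in>Poly_Mapping.keys p \<times> Poly_Mapping.keys q.
       (Poly_Mapping.lookup p (fst mm) * Poly_Mapping.lookup q (snd mm)) * mon_eval g (fst mm + snd mm))"
    by (simp add: sum_product sum.cartesian_product mon_eval_add mult_ac split_def)
  finally show ?thesis
    using p(1) q(1) F unfolding mpoly_over_def subfield_def
    by (auto intro!: poly_value_sum_monomials[OF F] simp: lookup_add in_keys_iff)
qed

lemma poly_value_1: "subfield F \<Longrightarrow> poly_value F V g 1"
  unfolding poly_value_def
  using mpoly_eval_single[of g 0 1]
  by (intro exI[of _ "Poly_Mapping.single 0 1"])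
     (auto simp: mon_eval_0 mpoly_over_single subfield_def simp del: single_one)

lemma poly_value_prod:
  "finite I \<Longrightarrow> subfield F \<Longrightarrow> (\<forall>i\<in>I. poly_value F V g (f i)) \<Longrightarrow> poly_value F V g (\<Prod>i\<in>I. f i)"
  by (induct I rule: finite_induct) (auto simp: poly_value_1 poly_value_mult)

lemma rational_function_field_common_denominator:
  fixes v :: "nat \<Rightarrow> 'k::field" and N :: nat
  assumes "rational_function_field F g V"
  obtains d where "d \<noteq> 0" "\<And>a. a < N \<Longrightarrow> poly_value F V g (v a * d)"
proof -
  have F: "subfield F" using assms rational_function_field_def by blast
  obtain p q where pq: "\<And>a. mpoly_over F V (p a) \<and> mpoly_over F V (q a) \<and>
      mpoly_eval g (q a) \<noteq> 0 \<and> v a = mpoly_eval g (p a) / mpoly_eval g (q a)"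
  proof -
    have "\<forall>a. \<exists>p q. mpoly_over F V p \<and> mpoly_over F V q \<and>
        mpoly_eval g q \<noteq> 0 \<and> v a = mpoly_eval g p / mpoly_eval g q"
      using assms unfolding rational_function_field_def by blast
    then show thesis using that by metis
  qed
  define d where "d = (\<Prod>b<N. mpoly_eval g (q b))"
  have "poly_value F V g (v a * d)" if "a < N" for a
  proof -
    have "d = mpoly_eval g (q a) * (\<Prod>b\<in>{..<N}-{a}. mpoly_eval g (q b))"
      unfolding d_def using that by (simp add: prod.remove)
    then have "v a * d = mpoly_eval g (p a) * (\<Prod>b\<in>{..<N}-{a}. mpoly_eval g (q b))"
      using pq[of a] by simp
    moreover have "poly_value F V g (\<Prod>b\<in>{..<N}-{a}. mpoly_eval g (q b))"
      using F pq by (intro poly_value_prod) (auto simp: poly_value_def)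
    ultimately show ?thesis
      using pq[of a] poly_value_mult[OF F] poly_value_def by metis
  qed
  moreover have "d \<noteq> 0" using pq by (simp add: d_def)
  ultimately show thesis using that by blast
qed

lemma sum_power2_char2:
  fixes f :: "'a \<Rightarrow> 'k::comm_ring_1"
  assumes "(2::'k) = 0" and "finite I"
  shows "(\<Sum>i\<in>I. f i)^2 = (\<Sum>i\<in>I. f i ^ 2)"
  using assms(2)
proof (induct I rule: finite_induct)
  case (insert x I)
  have "(f x + sum f I)^2 = f x ^ 2 + (sum f I)^2 + 2 * f x * sum f I"
    by (simp add: power2_eq_square algebra_simps)
  then show ?case using insert assms(1) by simp
qed simp

definition set_monomial :: "'v set \<Rightarrow> ('v \<Rightarrow>\<^sub>0 nat)" where
  "set_monomial S = (\<Sum>x\<in>S. Poly_Mapping.single x 1)"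

lemma lookup_set_monomial:
  "finite S \<Longrightarrow> Poly_Mapping.lookup (set_monomial S) x = (if x \<in> S then 1 else 0)"
  by (simp add: set_monomial_def lookup_sum lookup_single when_def)

lemma keys_set_monomial: "finite S \<Longrightarrow> Poly_Mapping.keys (set_monomial S) \<subseteq> S"
  by (auto simp: in_keys_iff lookup_set_monomial split: if_splits)

lemma mon_eval_set_monomial: "finite S \<Longrightarrow> mon_eval g (set_monomial S) = (\<Prod>x\<in>S. g x)"
  using mon_eval_superset[of S "set_monomial S" g] keys_set_monomial[of S]
  by (simp add: lookup_set_monomial)

lemma double_plus_set_monomial_eq_iff:
  assumes "finite S" "finite S'"
  shows "m + m + set_monomial S = m' + m' + set_monomial S' \<longleftrightarrow> S = S' \<and> m = m'"
proof
  assume e: "m + m + set_monomial S = m' + m' + set_monomial S'"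
  have h: "2 * Poly_Mapping.lookup m x + (if x \<in> S then 1 else 0) =
           2 * Poly_Mapping.lookup m' x + (if x \<in> S' then 1 else 0)" for x
    using arg_cong[OF e, of "\<lambda>p. Poly_Mapping.lookup p x"]
    by (simp add: lookup_add lookup_set_monomial assms)
  have "x \<in> S \<longleftrightarrow> x \<in> S'" for x
    using h[of x] by (auto split: if_splits) presburger+
  then have "S = S'" by blast
  moreover have "m = m'"
    by (rule poly_mapping_eqI) (use h \<open>S = S'\<close> in auto)
  ultimately show "S = S' \<and> m = m'" ..
qed simp

text \<open>In characteristic 2 squaring a polynomial squares its coefficients and doubles its
  exponents.\<close>
definition square_shift :: "'v set \<Rightarrow> ('v, 'k::field) mpoly \<Rightarrow> ('v, 'k) mpoly" where
  "square_shift S r = (\<Sum>m\<in>Poly_Mapping.keys r.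
      Poly_Mapping.single (m + m + set_monomial S) (Poly_Mapping.lookup r m ^ 2))"

lemma mpoly_eval_square_shift:
  fixes g :: "'v \<Rightarrow> 'k::field"
  assumes char2: "(2::'k) = 0" and "finite S"
  shows "mpoly_eval g (square_shift S r) = mpoly_eval g r ^ 2 * (\<Prod>x\<in>S. g x)"
proof -
  have "mpoly_eval g r ^ 2 =
      (\<Sum>m\<in>Poly_Mapping.keys r. (Poly_Mapping.lookup r m * mon_eval g m) ^ 2)"
    using mpoly_eval_superset[of "Poly_Mapping.keys r" r g] by (simp add: sum_power2_char2[OF char2])
  then show ?thesis
    using \<open>finite S\<close>
    by (simp add: square_shift_def mpoly_eval_sum mpoly_eval_single mon_eval_add
        mon_eval_set_monomial sum_distrib_left power2_eq_square mult_ac)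
qed

lemma mpoly_over_square_shift:
  assumes F: "subfield F" and r: "mpoly_over F V r" and "finite S" "S \<subseteq> V"
  shows "mpoly_over F V (square_shift S r)"
  unfolding square_shift_def
proof (intro mpoly_over_sum[OF _ F] ballI mpoly_over_single[OF F] allI impI)
  fix m assume m: "m \<in> Poly_Mapping.keys r"
  show "Poly_Mapping.lookup r m ^ 2 \<in> F"
    using r F by (simp add: mpoly_over_def subfield_def power2_eq_square)
  fix x assume "Poly_Mapping.lookup (m + m + set_monomial S) x \<noteq> 0"
  then show "x \<in> V"
    using r m assms(3,4)
    by (auto simp: lookup_add lookup_set_monomial mpoly_over_def in_keys_iff split: if_splits)
qed simp

lemma lookup_square_shift:
  assumes "finite S" "finite S'"
  shows "Poly_Mapping.lookup (square_shift S r) (m + m + set_monomial S') =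
         (if S = S' then Poly_Mapping.lookup r m ^ 2 else 0)"
proof -
  have "Poly_Mapping.lookup (square_shift S r) (m + m + set_monomial S') =
      (\<Sum>k\<in>Poly_Mapping.keys r. if S = S' \<and> k = m then Poly_Mapping.lookup r k ^ 2 else 0)"
    unfolding square_shift_def lookup_sum lookup_single
    using double_plus_set_monomial_eq_iff[OF assms(1,2)] by (simp add: when_def)
  then show ?thesis by (auto simp: in_keys_iff)
qed

lemma mpoly_sum_squares_distinct_monomials_eq_0:
  fixes g :: "'v \<Rightarrow> 'k::field" and N :: nat
  assumes char2: "(2::'k) = 0" and K: "rational_function_field F g V"
    and r: "\<And>a. a < N \<Longrightarrow> mpoly_over F V (r a)"
    and S: "\<And>a. a < N \<Longrightarrow> finite (S a) \<and> S a \<subseteq> V"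
    and inj: "inj_on S {..<N}"
    and eq: "(\<Sum>a<N. mpoly_eval g (r a) ^ 2 * (\<Prod>x\<in>S a. g x)) = 0"
    and "a0 < N"
  shows "r a0 = 0"
proof -
  have F: "subfield F" and indep: "\<And>p. mpoly_over F V p \<Longrightarrow> mpoly_eval g p = 0 \<Longrightarrow> p = 0"
    using K unfolding rational_function_field_def by blast+
  define P where "P = (\<Sum>a<N. square_shift (S a) (r a))"
  have "mpoly_eval g P = 0"
    using eq S by (simp add: P_def mpoly_eval_sum mpoly_eval_square_shift[OF char2])
  moreover have "mpoly_over F V P"
    unfolding P_def using F r S by (intro mpoly_over_sum ballI mpoly_over_square_shift[OF F]) auto
  ultimately have P0: "P = 0" by (rule indep[rotated])
  have "Poly_Mapping.lookup (r a0) m = 0" for m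
  proof -
    have "Poly_Mapping.lookup P (m + m + set_monomial (S a0)) =
        (\<Sum>a<N. if S a = S a0 then Poly_Mapping.lookup (r a) m ^ 2 else 0)"
      unfolding P_def lookup_sum using S \<open>a0 < N\<close> by (simp add: lookup_square_shift)
    also have "\<dots> = (\<Sum>a<N. if a = a0 then Poly_Mapping.lookup (r a) m ^ 2 else 0)"
      using inj \<open>a0 < N\<close> by (intro sum.cong) (auto simp: inj_on_def)
    also have "\<dots> = Poly_Mapping.lookup (r a0) m ^ 2"
      using \<open>a0 < N\<close> by simp
    finally show ?thesis using P0 by simp
  qed
  then show ?thesis by (intro poly_mapping_eqI) simp
qed

lemma sum_squares_distinct_monomials_eq_0:
  fixes g :: "'v \<Rightarrow> 'k::field" and v :: "nat \<Rightarrow> 'k" and N :: nat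
  assumes char2: "(2::'k) = 0" and K: "rational_function_field F g V"
    and S: "\<And>a. a < N \<Longrightarrow> finite (S a) \<and> S a \<subseteq> V"
    and inj: "inj_on S {..<N}"
    and eq: "(\<Sum>a<N. v a ^ 2 * (\<Prod>x\<in>S a. g x)) = 0"
    and "a0 < N"
  shows "v a0 = 0"
proof -
  obtain d where d: "d \<noteq> 0" and vd: "\<And>a. a < N \<Longrightarrow> poly_value F V g (v a * d)"
    using rational_function_field_common_denominator[OF K] by blast
  obtain r where r: "\<And>a. a < N \<Longrightarrow> mpoly_over F V (r a) \<and> mpoly_eval g (r a) = v a * d"
    using vd unfolding poly_value_def by metis
  have "(\<Sum>a<N. mpoly_eval g (r a) ^ 2 * (\<Prod>x\<in>S a. g x)) =
      d ^ 2 * (\<Sum>a<N. v a ^ 2 * (\<Prod>x\<in>S a. g x))"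
    using r by (simp add: sum_distrib_left power_mult_distrib mult_ac)
  then have "r a0 = 0"
    using mpoly_sum_squares_distinct_monomials_eq_0[OF char2 K _ S inj] eq r \<open>a0 < N\<close> by simp
  then show ?thesis
    using r[OF \<open>a0 < N\<close>] d by (simp add: mpoly_eval_0)
qed

lemma rational_function_field_gen_nonzero:
  fixes g :: "'v \<Rightarrow> 'k::field"
  assumes K: "rational_function_field F g V" and "x \<in> V"
  shows "g x \<noteq> 0"
proof
  assume "g x = 0"
  have F: "subfield F" and indep: "\<And>p. mpoly_over F V p \<Longrightarrow> mpoly_eval g p = 0 \<Longrightarrow> p = 0"
    using K unfolding rational_function_field_def by blast+
  have "mpoly_over F V (Poly_Mapping.single (set_monomial {x}) 1)"
    using F \<open>x \<in> V\<close> by (intro mpoly_over_single) (auto simp: subfield_def lookup_set_monomial)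
  moreover have "mpoly_eval g (Poly_Mapping.single (set_monomial {x}) 1) = 0"
    using \<open>g x = 0\<close> by (simp add: mpoly_eval_single mon_eval_set_monomial)
  ultimately have "Poly_Mapping.single (set_monomial {x}) (1::'k) = 0" by (rule indep)
  then show False by (metis lookup_single_eq lookup_zero one_neq_zero)
qed

section \<open>Diagonal forms\<close>

definition diagonal_form :: "'k::field bform \<Rightarrow> bool" where
  "diagonal_form f \<longleftrightarrow> (\<forall>a<fst f. \<forall>b<fst f. a \<noteq> b \<longrightarrow> snd f a b = 0)"

definition diag_entries :: "'k::field bform \<Rightarrow> 'k list" where
  "diag_entries f = map (\<lambda>a. snd f a a) [0..<fst f]"

definition pairwise_products :: "'k::times list \<Rightarrow> 'k list \<Rightarrow> 'k list" where
  "pairwise_products xs ys = concat (map (\<lambda>x. map (\<lambda>y. x * y) ys) xs)"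

lemma length_diag_entries [simp]: "length (diag_entries f) = fst f"
  by (simp add: diag_entries_def)

lemma nth_diag_entries: "a < fst f \<Longrightarrow> diag_entries f ! a = snd f a a"
  by (simp add: diag_entries_def)

lemma fst_tensor [simp]: "fst (tensor f g) = fst f * fst g"
  by (simp add: tensor_def)

lemma fst_orth [simp]: "fst (orth f g) = fst f + fst g"
  by (simp add: orth_def)

lemma fst_diagf [simp]: "fst (diagf xs) = length xs"
  by (simp add: diagf_def)

lemma upt_0_mult: "[0..<m * n] = concat (map (\<lambda>q. map (\<lambda>r. q * n + r) [0..<n]) [0..<m])"
proof (induct m)
  case (Suc m)
  have "[0..<m * n + n] = [0..<m * n] @ [m * n..<m * n + n]"
    by (rule upt_add_eq_append) simp
  then have "[0..<Suc m * n] = [0..<m * n] @ [m * n..<m * n + n]"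
    by (simp add: add.commute)
  also have "[m * n..<m * n + n] = map (\<lambda>r. m * n + r) [0..<n]"
    using map_add_upt[of "m * n" n] by (simp add: add.commute)
  finally show ?case using Suc by simp
qed simp

lemma diag_entries_tensor:
  "diag_entries (tensor f g) = pairwise_products (diag_entries f) (diag_entries g)"
proof -
  have "map (\<lambda>a. snd f (a div fst g) (a div fst g) * snd g (a mod fst g) (a mod fst g))
          [0..<fst f * fst g] =
        concat (map (\<lambda>q. map (\<lambda>r. snd f q q * snd g r r) [0..<fst g]) [0..<fst f])"
    unfolding upt_0_mult map_concat map_map
    by (intro arg_cong[where f = concat] map_cong refl) auto
  then show ?thesis
    by (simp add: diag_entries_def tensor_def pairwise_products_def map_concat o_def)
qed

lemma diagonal_form_tensor:
  assumes f: "diagonal_form f" and g: "diagonal_form g"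
  shows "diagonal_form (tensor f g)"
  unfolding diagonal_form_def
proof (intro allI impI)
  fix a b assume a: "a < fst (tensor f g)" and b: "b < fst (tensor f g)" and "a \<noteq> b"
  let ?n = "fst g"
  have "0 < ?n" using a by (cases ?n) auto
  then have ab: "a div ?n < fst f" "b div ?n < fst f" "a mod ?n < ?n" "b mod ?n < ?n"
    using a b by (simp_all add: less_mult_imp_div_less)
  show "snd (tensor f g) a b = 0"
  proof (cases "a div ?n = b div ?n")
    case True
    then have "a mod ?n \<noteq> b mod ?n" using \<open>a \<noteq> b\<close> by (metis div_mod_decomp)
    then show ?thesis using g ab by (simp add: tensor_def diagonal_form_def)
  next
    case False
    then show ?thesis using f ab by (simp add: tensor_def diagonal_form_def)
  qed
qed

lemma diag_entries_orth: "diag_entries (orth f g) = diag_entries f @ diag_entries g"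
proof -
  have "[0..<fst f + fst g] = [0..<fst f] @ map (\<lambda>r. fst f + r) [0..<fst g]"
    using map_add_upt[of "fst f" "fst g"] upt_add_eq_append[of 0 "fst f" "fst g"]
    by (simp add: add.commute)
  then show ?thesis by (simp add: diag_entries_def orth_def o_def)
qed

lemma diagonal_form_orth:
  assumes f: "diagonal_form f" and g: "diagonal_form g"
  shows "diagonal_form (orth f g)"
  unfolding diagonal_form_def
proof (intro allI impI)
  fix a b assume a: "a < fst (orth f g)" and b: "b < fst (orth f g)" and "a \<noteq> b"
  show "snd (orth f g) a b = 0"
  proof (cases "a < fst f \<and> b < fst f")
    case True
    then show ?thesis using f \<open>a \<noteq> b\<close> by (simp add: orth_def diagonal_form_def)
  next
    case outside: False
    show ?thesis
    proof (cases "fst f \<le> a \<and> fst f \<le> b")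
      case True
      then have "a - fst f < fst g" "b - fst f < fst g" "a - fst f \<noteq> b - fst f"
        using a b \<open>a \<noteq> b\<close> by auto
      then show ?thesis using g True by (simp add: orth_def diagonal_form_def)
    next
      case False
      then show ?thesis using outside by (auto simp: orth_def)
    qed
  qed
qed

lemma diag_entries_diagf: "diag_entries (diagf xs) = xs"
proof -
  have "diag_entries (diagf xs) = map (\<lambda>a. xs ! a) [0..<length xs]"
    unfolding diag_entries_def diagf_def by (intro map_cong) auto
  then show ?thesis by (simp add: map_nth)
qed

lemma diagonal_form_diagf: "diagonal_form (diagf xs)"
  by (simp add: diagonal_form_def diagf_def)

lemma diag_entries_zerof: "diag_entries zerof = []"
  by (simp add: diag_entries_def zerof_def)

lemma diagonal_form_zerof: "diagonal_form zerof"
  by (simp add: diagonal_form_def zerof_def)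

lemma bil_diagonal_form:
  assumes "diagonal_form f"
  shows "bil f v w = (\<Sum>a<fst f. v a * snd f a a * w a)"
  unfolding bil_def
proof (rule sum.cong)
  fix a assume a: "a \<in> {..<fst f}"
  have "(\<Sum>b<fst f. v a * snd f a b * w b) = (\<Sum>b<fst f. if b = a then v a * snd f a a * w a else 0)"
    using assms a by (intro sum.cong) (auto simp: diagonal_form_def)
  then show "(\<Sum>b<fst f. v a * snd f a b * w b) = v a * snd f a a * w a"
    using a by simp
qed simp

lemma anisotropic_diagonal_formI:
  fixes f :: "'k::field bform"
  assumes d: "diagonal_form f"
    and h: "\<And>v :: nat \<Rightarrow> 'k. (\<Sum>a<fst f. v a ^ 2 * diag_entries f ! a) = 0 \<Longrightarrow> \<forall>a<fst f. v a = 0"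
  shows "anisotropic f"
  unfolding anisotropic_def
proof (intro allI impI)
  fix v :: "nat \<Rightarrow> 'k" assume "nonzero_vec (fst f) v"
  moreover have "bil f v v = (\<Sum>a<fst f. v a ^ 2 * diag_entries f ! a)"
    unfolding bil_diagonal_form[OF d] by (intro sum.cong) (auto simp: nth_diag_entries power2_eq_square)
  ultimately show "bil f v v \<noteq> 0" using h[of v] by (auto simp: nonzero_vec_def)
qed

lemma sym_nondeg_diagonal_form:
  fixes f :: "'k::field bform"
  assumes d: "diagonal_form f" and nz: "0 \<notin> set (diag_entries f)"
  shows "sym_nondeg f"
  unfolding sym_nondeg_def
proof (intro conjI allI impI)
  fix a b assume "a < fst f" "b < fst f"
  then show "snd f a b = snd f b a" using d by (cases "a = b") (auto simp: diagonal_form_def)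
next
  fix v :: "nat \<Rightarrow> 'k" assume "nonzero_vec (fst f) v"
  then obtain a where a: "a < fst f" "v a \<noteq> 0" by (auto simp: nonzero_vec_def)
  have "snd f a a \<noteq> 0" using nz a by (metis nth_diag_entries length_diag_entries nth_mem)
  moreover have "bil f v (\<lambda>b. if b = a then 1 else 0) = v a * snd f a a"
    unfolding bil_diagonal_form[OF d] using a by (simp add: if_distrib cong: if_cong)
  ultimately show "\<exists>w. bil f v w \<noteq> 0" using a by (metis mult_eq_0_iff)
qed

lemma isometric_diagonal_forms:
  fixes f g :: "'k::field bform"
  assumes df: "diagonal_form f" and dg: "diagonal_form g"
    and m: "mset (diag_entries g) = mset (diag_entries f)"
  shows "isometric f g"
proof -
  have len: "fst g = fst f" using mset_eq_length[OF m] by simp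
  obtain \<sigma> where bij: "bij_betw \<sigma> {..<fst f} {..<fst f}"
    and eqs: "\<forall>i<fst f. diag_entries g ! i = diag_entries f ! \<sigma> i"
    using permutation_Ex_bij[of "diag_entries g" "diag_entries f"] m len by auto
  have \<sigma>_lt: "\<sigma> a < fst f" if "a < fst f" for a using bij that by (auto simp: bij_betw_def)
  have \<sigma>_inj: "\<sigma> a = \<sigma> b \<Longrightarrow> a < fst f \<Longrightarrow> b < fst f \<Longrightarrow> a = b" for a b
    using bij by (auto simp: bij_betw_def inj_on_def)
  define P where "P x y = (if x = \<sigma> y then 1 else (0::'k))" for x y
  define Q where "Q x y = (if y = \<sigma> x then 1 else (0::'k))" for x y
  have inverse: "(\<Sum>c<fst f. P a c * Q c b) = (if a = b then 1 else 0)" if "a < fst f" for a b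
  proof -
    have "(\<Sum>c<fst f. P a c * Q c b) = (\<Sum>c<fst f. (\<lambda>x. if a = x \<and> b = x then 1 else 0) (\<sigma> c))"
      by (intro sum.cong) (auto simp: P_def Q_def)
    also have "\<dots> = (\<Sum>x<fst f. if a = x \<and> b = x then 1 else (0::'k))"
      by (rule sum.reindex_bij_betw[OF bij])
    finally show ?thesis using that by (cases "a = b") (auto intro!: sum.neutral)
  qed
  have congruence: "snd g a b = (\<Sum>c<fst f. \<Sum>d<fst f. P c a * snd f c d * P d b)"
    if a: "a < fst f" and b: "b < fst f" for a b
  proof -
    have "(\<Sum>c<fst f. \<Sum>d<fst f. P c a * snd f c d * P d b) =
        (\<Sum>c<fst f. if c = \<sigma> a then snd f c (\<sigma> b) else 0)"
      using \<sigma>_lt[OF b] by (intro sum.cong) (auto simp: P_def if_distrib cong: if_cong)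
    also have "\<dots> = snd f (\<sigma> a) (\<sigma> b)" using \<sigma>_lt[OF a] by simp
    also have "\<dots> = snd g a b"
    proof (cases "a = b")
      case True
      then show ?thesis using eqs a len nth_diag_entries[of a g] nth_diag_entries[of "\<sigma> a" f] \<sigma>_lt[OF a]
        by simp
    next
      case False
      then have "\<sigma> a \<noteq> \<sigma> b" using \<sigma>_inj a b by blast
      then show ?thesis using False dg df a b \<sigma>_lt[OF a] \<sigma>_lt[OF b] len
        by (simp add: diagonal_form_def)
    qed
    finally show ?thesis ..
  qed
  show ?thesis
    unfolding isometric_def using len inverse congruence by (intro conjI exI[of _ P] exI[of _ Q]) auto
qed

text \<open>In characteristic 2 the vectors \<open>e a + e (a + m)\<close> span a totally isotropic subspace
  of \<open>f \<perp> f\<close>.\<close>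
lemma metabolic_orth_self:
  fixes f :: "'k::field bform"
  assumes char2: "(2::'k) = 0" and d: "diagonal_form f" and nz: "0 \<notin> set (diag_entries f)"
  shows "metabolic (orth f f)"
proof -
  let ?m = "fst f"
  define ws where "ws a j = (if j = a \<or> j = a + ?m then 1 else (0::'k))" for a j
  have indep: "\<forall>a<?m. c a = 0" if h: "\<forall>j<fst (orth f f). (\<Sum>a<?m. c a * ws a j) = 0" for c
  proof (intro allI impI)
    fix a0 assume a0: "a0 < ?m"
    have "(\<Sum>a<?m. c a * ws a a0) = (\<Sum>a<?m. if a = a0 then c a else 0)"
      using a0 by (intro sum.cong) (auto simp: ws_def)
    then show "c a0 = 0" using h a0 by simp
  qed
  have iso: "bil (orth f f) (ws a) (ws b) = 0" if a: "a < ?m" and b: "b < ?m" for a b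
  proof -
    let ?e = "\<lambda>j. snd (orth f f) j j"
    have "bil (orth f f) (ws a) (ws b) = (\<Sum>j<?m + ?m. ws a j * ?e j * ws b j)"
      using bil_diagonal_form[OF diagonal_form_orth[OF d d]] by simp
    also have "\<dots> = (\<Sum>j<?m + ?m. (if j = a then (if a = b then ?e j else 0) else 0) +
                                  (if j = a + ?m then (if a = b then ?e j else 0) else 0))"
      using a b by (intro sum.cong) (auto simp: ws_def)
    also have "\<dots> = (if a = b then 2 * snd f a a else 0)"
      using a by (simp add: sum.distrib orth_def)
    finally show ?thesis using char2 by simp
  qed
  have "sym_nondeg (orth f f)"
    using nz by (intro sym_nondeg_diagonal_form diagonal_form_orth d) (simp add: diag_entries_orth)
  then show ?thesis
    unfolding metabolic_def using indep iso by (intro conjI exI[of _ ?m] exI[of _ ws]) auto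
qed

lemma metabolic_zerof: "metabolic (zerof :: 'k::field bform)"
  by (auto simp: metabolic_def sym_nondeg_def zerof_def nonzero_vec_def)

section \<open>Diagonal entries of Pfister forms\<close>

lemma pairwise_products_append_left:
  "pairwise_products (xs @ xs') ys = pairwise_products xs ys @ pairwise_products xs' ys"
  by (simp add: pairwise_products_def)

lemma pairwise_products_map_left:
  "pairwise_products (map (\<lambda>x. a * x) xs) ys = map (\<lambda>x. a * x) (pairwise_products xs ys)"
  for a :: "'k::semigroup_mult"
  by (induct xs) (simp_all add: pairwise_products_def mult.assoc)

lemma mset_pairwise_products_Cons_1:
  "mset (pairwise_products xs (1 # ys)) = mset xs + mset (pairwise_products xs ys)"
  for xs :: "'k::monoid_mult list"
  by (induct xs) (simp_all add: pairwise_products_def)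

lemma mset_pairwise_products_append_right:
  "mset (pairwise_products xs (ys @ zs)) = mset (pairwise_products xs ys) + mset (pairwise_products xs zs)"
  by (induct xs) (simp_all add: pairwise_products_def)

lemma zero_notin_pairwise_products:
  "0 \<notin> set xs \<Longrightarrow> 0 \<notin> set ys \<Longrightarrow> 0 \<notin> set (pairwise_products xs ys)"
  for xs :: "'k::semiring_no_zero_divisors list"
  by (auto simp: pairwise_products_def)

lemma fst_pfister: "fst (pfister as) = 2 ^ length as"
  by (induct as) (simp_all add: pfister_def)

lemma pfister_Cons: "pfister (a # as) = tensor (diagf [1, a]) (pfister as)"
  by (simp add: pfister_def)

lemma pfister_eq_foldr_tensor: "pfister as = foldr tensor (map (\<lambda>a. diagf [1, a]) as) (diagf [1])"
  by (simp add: pfister_def foldr_map o_def)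

lemma diagonal_form_pfister: "diagonal_form (pfister as)"
  by (induct as) (simp_all add: pfister_Cons diagonal_form_diagf diagonal_form_tensor,
      simp add: pfister_def diagonal_form_diagf)

lemma diag_entries_pfister_Nil: "diag_entries (pfister []) = [1]"
  by (simp add: pfister_def diag_entries_diagf)

lemma diag_entries_pfister_Cons:
  "diag_entries (pfister (a # as)) =
     diag_entries (pfister as) @ map (\<lambda>y. a * y) (diag_entries (pfister as))"
  by (simp add: pfister_Cons diag_entries_tensor diag_entries_diagf pairwise_products_def map_idI)

lemma diag_entries_pfister_append:
  "diag_entries (pfister (as @ bs)) =
     pairwise_products (diag_entries (pfister as)) (diag_entries (pfister bs))"
proof (induct as)
  case Nil
  show ?case by (simp add: diag_entries_pfister_Nil pairwise_products_def map_idI)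
next
  case (Cons a as)
  then show ?case
    by (simp add: diag_entries_pfister_Cons pairwise_products_append_left pairwise_products_map_left)
qed

lemma diag_entries_pfister_hd: "diag_entries (pfister as) = 1 # tl (diag_entries (pfister as))"
proof (induct as)
  case (Cons a as)
  then show ?case by (metis append_Cons diag_entries_pfister_Cons list.sel(3))
qed (simp add: diag_entries_pfister_Nil)

lemma zero_notin_diag_entries_pfister: "0 \<notin> set as \<Longrightarrow> 0 \<notin> set (diag_entries (pfister as))"
  by (induct as) (auto simp: diag_entries_pfister_Nil diag_entries_pfister_Cons)

lemma fst_pure_pfister: "fst (pure_pfister as) = 2 ^ length as - 1"
  by (simp add: pure_pfister_def fst_pfister)

lemma diagonal_form_pure_pfister: "diagonal_form (pure_pfister as)"
  using diagonal_form_pfister[of as] unfolding diagonal_form_def pure_pfister_def by auto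

lemma diag_entries_pure_pfister: "diag_entries (pure_pfister as) = tl (diag_entries (pfister as))"
proof -
  obtain k where k: "fst (pfister as) = Suc k"
    using fst_pfister[of as] by (metis not0_implies_Suc power_not_zero zero_neq_numeral)
  have "tl [0..<Suc k] = map Suc [0..<k]" by (simp add: tl_upt map_Suc_upt)
  then show ?thesis
    by (simp add: diag_entries_def pure_pfister_def k map_tl[symmetric] o_def del: upt_Suc)
qed

lemma set_tl_subset: "set (tl xs) \<subseteq> set xs"
  by (cases xs) auto

definition pfister_tensor_pure_orth :: "'k::field list \<Rightarrow> 'k list \<Rightarrow> 'k list \<Rightarrow> 'k bform" where
  "pfister_tensor_pure_orth xs ys zs = tensor (pfister xs) (orth (pure_pfister ys) (pure_pfister zs))"

lemma fst_pfister_tensor_pure_orth: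
  assumes "length zs = length ys"
  shows "fst (pfister_tensor_pure_orth xs ys zs) =
    2 ^ (length xs + length ys + 1) - 2 ^ (length xs + 1)"
proof -
  have "fst (pfister_tensor_pure_orth xs ys zs) = 2 ^ length xs * (2 * (2 ^ length ys - 1))"
    using assms by (simp add: pfister_tensor_pure_orth_def fst_pfister fst_pure_pfister mult_2)
  then show ?thesis
    by (simp add: diff_mult_distrib2 power_add mult_ac)
qed

lemma diagonal_form_pfister_tensor_pure_orth:
  "diagonal_form (pfister_tensor_pure_orth xs ys zs)"
  unfolding pfister_tensor_pure_orth_def
  by (intro diagonal_form_tensor diagonal_form_orth diagonal_form_pfister diagonal_form_pure_pfister)

lemma diag_entries_pfister_tensor_pure_orth:
  "diag_entries (pfister_tensor_pure_orth xs ys zs) =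
     pairwise_products (diag_entries (pfister xs))
       (tl (diag_entries (pfister ys)) @ tl (diag_entries (pfister zs)))"
  by (simp add: pfister_tensor_pure_orth_def diag_entries_tensor diag_entries_orth
      diag_entries_pure_pfister)

lemma sym_nondeg_pfister_tensor_pure_orth:
  assumes "0 \<notin> set (xs @ ys @ zs)"
  shows "sym_nondeg (pfister_tensor_pure_orth xs ys zs)"
proof (intro sym_nondeg_diagonal_form diagonal_form_pfister_tensor_pure_orth)
  have "0 \<notin> set (tl (diag_entries (pfister ys)) @ tl (diag_entries (pfister zs)))"
    using assms set_tl_subset zero_notin_diag_entries_pfister by fastforce
  then show "0 \<notin> set (diag_entries (pfister_tensor_pure_orth xs ys zs))"
    using assms zero_notin_diag_entries_pfister[of xs]
    by (simp add: diag_entries_pfister_tensor_pure_orth zero_notin_pairwise_products)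
qed

lemma isometric_pfister_tensor_pure_orth_orth_double:
  "isometric (orth (pfister_tensor_pure_orth xs ys zs) (orth (pfister xs) (pfister xs)))
     (orth (orth (pfister (xs @ ys)) (orth (pfister (xs @ zs)) zerof)) zerof)"
proof (intro isometric_diagonal_forms diagonal_form_orth diagonal_form_pfister_tensor_pure_orth
    diagonal_form_pfister diagonal_form_zerof)
  obtain DY DZ where "diag_entries (pfister ys) = 1 # DY" "diag_entries (pfister zs) = 1 # DZ"
    using diag_entries_pfister_hd by blast
  then show "mset (diag_entries (orth (orth (pfister (xs @ ys)) (orth (pfister (xs @ zs)) zerof)) zerof)) =
      mset (diag_entries (orth (pfister_tensor_pure_orth xs ys zs) (orth (pfister xs) (pfister xs))))"
    by (simp add: diag_entries_orth diag_entries_zerof diag_entries_pfister_append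
        diag_entries_pfister_tensor_pure_orth mset_pairwise_products_Cons_1
        mset_pairwise_products_append_right)
qed

lemma in_I_pow_pfister_tensor_pure_orth:
  fixes xs ys zs :: "'k::field list"
  assumes char2: "(2::'k) = 0" and nz: "0 \<notin> set (xs @ ys @ zs)"
    and "length xs + length ys = n" "length xs + length zs = n"
  shows "in_I_pow n (pfister_tensor_pure_orth xs ys zs)"
proof -
  let ?T = "orth (pfister (xs @ ys)) (orth (pfister (xs @ zs)) zerof)"
  define gs where "gs = [(False, map (\<lambda>a. diagf [1, a]) (xs @ ys)),
                         (False, map (\<lambda>a. diagf [1, a]) (xs @ zs))]"
  have binary_nondeg: "sym_nondeg (diagf [1, a])" if "a \<in> set (xs @ ys @ zs)" for a
    using that nz
    by (intro sym_nondeg_diagonal_form diagonal_form_diagf) (auto simp: diag_entries_diagf)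
  have gs_generators:
    "\<forall>(s, fs)\<in>set gs. length fs = n \<and> (\<forall>c\<in>set fs. sym_nondeg c \<and> even (fst c))"
    using assms binary_nondeg unfolding gs_def by auto
  have gs_sum: "foldr orth (map (\<lambda>(s, fs). (if s then negf else id) (foldr tensor fs (diagf [1]))) gs)
      zerof = ?T"
    by (simp add: gs_def pfister_eq_foldr_tensor)
  have "metabolic (orth (pfister xs) (pfister xs))"
    using char2 nz zero_notin_diag_entries_pfister[of xs]
    by (intro metabolic_orth_self diagonal_form_pfister) auto
  moreover have "sym_nondeg ?T"
    using nz zero_notin_diag_entries_pfister[of "xs @ ys"] zero_notin_diag_entries_pfister[of "xs @ zs"]
    by (intro sym_nondeg_diagonal_form diagonal_form_orth diagonal_form_pfister diagonal_form_zerof)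
       (simp add: diag_entries_orth diag_entries_zerof)
  ultimately have "witt_eq (pfister_tensor_pure_orth xs ys zs) ?T"
    unfolding witt_eq_def
    using sym_nondeg_pfister_tensor_pure_orth[OF nz] metabolic_zerof
      isometric_pfister_tensor_pure_orth_orth_double[of xs ys zs] by blast
  then show ?thesis
    unfolding in_I_pow_def gs_sum[symmetric] using gs_generators by blast
qed

section \<open>Anisotropy over the rational function field\<close>

text \<open>The subsets of \<open>set vs\<close> in the order in which \<open>\<langle>\<langle>map g vs\<rangle>\<rangle>\<close> lists its
  diagonal entries \<open>\<Prod>x\<in>S. g x\<close>.\<close>
fun subsets_list :: "'a list \<Rightarrow> 'a set list" where
  "subsets_list [] = [{}]"
| "subsets_list (v # vs) = subsets_list vs @ map (insert v) (subsets_list vs)"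

lemma subsets_list_subset: "S \<in> set (subsets_list vs) \<Longrightarrow> S \<subseteq> set vs"
  by (induct vs arbitrary: S) auto

lemma subsets_list_finite: "S \<in> set (subsets_list vs) \<Longrightarrow> finite S"
  using subsets_list_subset finite_subset by blast

lemma subsets_list_hd: "subsets_list vs = {} # tl (subsets_list vs)"
proof (induct vs)
  case (Cons v vs)
  then show ?case by (metis append_Cons list.sel(3) subsets_list.simps(2))
qed simp

lemma distinct_subsets_list: "distinct vs \<Longrightarrow> distinct (subsets_list vs)"
proof (induct vs)
  case (Cons v vs)
  have v: "v \<notin> S" if "S \<in> set (subsets_list vs)" for S
    using subsets_list_subset[OF that] Cons.prems by auto
  then have "inj_on (insert v) (set (subsets_list vs))"
    by (intro inj_onI) (metis insert_ident)
  then show ?case using Cons v by (auto simp: distinct_map)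
qed simp

lemma nonempty_tl_subsets_list: "distinct vs \<Longrightarrow> S \<in> set (tl (subsets_list vs)) \<Longrightarrow> S \<noteq> {}"
  using distinct_subsets_list[of vs] subsets_list_hd[of vs] by (metis distinct.simps(2))

lemma diag_entries_pfister_map:
  "distinct vs \<Longrightarrow> diag_entries (pfister (map g vs)) = map (\<lambda>S. \<Prod>x\<in>S. g x) (subsets_list vs)"
proof (induct vs)
  case Nil
  show ?case by (simp add: diag_entries_pfister_Nil)
next
  case (Cons v vs)
  have "(\<Prod>x\<in>insert v S. g x) = g v * (\<Prod>x\<in>S. g x)" if "S \<in> set (subsets_list vs)" for S
    using subsets_list_subset[OF that] subsets_list_finite[OF that] Cons.prems
    by (subst prod.insert) auto
  then show ?case using Cons by (simp add: diag_entries_pfister_Cons o_def)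
qed

lemma pairwise_products_map_prod:
  assumes "\<forall>S\<in>set As. \<forall>T\<in>set Bs. finite S \<and> finite T \<and> S \<inter> T = {}"
  shows "pairwise_products (map (\<lambda>S. \<Prod>x\<in>S. g x) As) (map (\<lambda>S. \<Prod>x\<in>S. g x) Bs) =
    map (\<lambda>S. \<Prod>x\<in>S. g x) (map (\<lambda>(S, T). S \<union> T) (List.product As Bs))"
  using assms
  by (simp add: pairwise_products_def product_concat_map map_concat o_def prod.union_disjoint
      cong: map_cong)

lemma distinct_map_union_product:
  assumes "distinct As" "distinct Bs"
    and "\<forall>S\<in>set As. S \<subseteq> U" "\<forall>T\<in>set Bs. T \<inter> U = {}"
  shows "distinct (map (\<lambda>(S, T). S \<union> T) (List.product As Bs))"
proof -
  have "inj_on (\<lambda>(S, T). S \<union> T) (set As \<times> set Bs)"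
  proof (rule inj_onI, clarsimp)
    fix S T S' T' assume "S \<in> set As" "T \<in> set Bs" "S' \<in> set As" "T' \<in> set Bs"
      and e: "S \<union> T = S' \<union> T'"
    then have "S = (S \<union> T) \<inter> U" "S' = (S' \<union> T') \<inter> U" "T = (S \<union> T) - U" "T' = (S' \<union> T') - U"
      using assms(3,4) by blast+
    then show "S = S' \<and> T = T'" using e by metis
  qed
  then show ?thesis using distinct_product[OF assms(1,2)] by (simp add: distinct_map)
qed

lemma anisotropic_diagonal_monomial_form:
  fixes g :: "'v \<Rightarrow> 'k::field" and f :: "'k bform"
  assumes char2: "(2::'k) = 0" and K: "rational_function_field F g V" and d: "diagonal_form f"
    and entries: "diag_entries f = map (\<lambda>S. \<Prod>x\<in>S. g x) Ss"
    and "distinct Ss" and Ss: "\<forall>S\<in>set Ss. finite S \<and> S \<subseteq> V"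
  shows "anisotropic f"
proof (rule anisotropic_diagonal_formI[OF d], intro allI impI)
  fix v :: "nat \<Rightarrow> 'k" and a assume eq: "(\<Sum>a<fst f. v a ^ 2 * diag_entries f ! a) = 0" and "a < fst f"
  have len: "length Ss = fst f" using arg_cong[OF entries, of length] by simp
  show "v a = 0"
  proof (rule sum_squares_distinct_monomials_eq_0[OF char2 K])
    show "(\<Sum>a<fst f. v a ^ 2 * (\<Prod>x\<in>Ss ! a. g x)) = 0"
      using eq len by (simp add: entries)
    show "inj_on ((!) Ss) {..<fst f}"
      using \<open>distinct Ss\<close> len by (simp add: inj_on_def nth_eq_iff_index_eq)
  qed (use Ss len \<open>a < fst f\<close> in auto)
qed

lemma anisotropic_pfister_tensor_pure_orth_gens:
  fixes g :: "'v \<Rightarrow> 'k::field"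
  assumes char2: "(2::'k) = 0" and K: "rational_function_field F g V"
    and dist: "distinct (xs @ ys @ zs)" and V: "set (xs @ ys @ zs) \<subseteq> V"
  shows "anisotropic (pfister_tensor_pure_orth (map g xs) (map g ys) (map g zs))"
proof -
  define Ts where "Ts = tl (subsets_list ys) @ tl (subsets_list zs)"
  define Ss where "Ss = map (\<lambda>(S, T). S \<union> T) (List.product (subsets_list xs) Ts)"
  have Ts: "T \<subseteq> set ys \<union> set zs" "finite T" if "T \<in> set Ts" for T
    using that set_tl_subset subsets_list_subset subsets_list_finite unfolding Ts_def by fastforce+
  have "distinct Ts"
  proof -
    have "T = {}" if "T \<in> set (tl (subsets_list ys))" "T \<in> set (tl (subsets_list zs))" for T
    proof -
      have "T \<subseteq> set ys" "T \<subseteq> set zs"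
        using that set_tl_subset[of "subsets_list ys"] set_tl_subset[of "subsets_list zs"]
          subsets_list_subset by blast+
      then show ?thesis using dist by auto
    qed
    then show ?thesis
      using dist nonempty_tl_subsets_list[of ys] distinct_subsets_list[of ys]
        distinct_subsets_list[of zs] by (auto simp: Ts_def distinct_tl)
  qed
  have Ts_xs: "T \<inter> set xs = {}" if "T \<in> set Ts" for T
    using Ts[OF that] dist by auto
  have ST: "finite S \<and> finite T \<and> S \<inter> T = {} \<and> S \<union> T \<subseteq> V"
    if "S \<in> set (subsets_list xs)" "T \<in> set Ts" for S T
    using subsets_list_subset[OF that(1)] subsets_list_finite[OF that(1)] Ts[OF that(2)]
      Ts_xs[OF that(2)] V by auto
  then have "\<forall>S\<in>set (subsets_list xs). \<forall>T\<in>set Ts. finite S \<and> finite T \<and> S \<inter> T = {}"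
    by blast
  then have "diag_entries (pfister_tensor_pure_orth (map g xs) (map g ys) (map g zs)) =
      map (\<lambda>S. \<Prod>x\<in>S. g x) Ss"
    using dist
    by (simp add: diag_entries_pfister_tensor_pure_orth diag_entries_pfister_map map_tl[symmetric]
        map_append[symmetric] Ts_def[symmetric] Ss_def pairwise_products_map_prod del: map_append)
  moreover have "distinct Ss"
    unfolding Ss_def using dist subsets_list_subset Ts_xs
    by (intro distinct_map_union_product[OF _ \<open>distinct Ts\<close>, where U = "set xs"]
        distinct_subsets_list) auto
  moreover have "\<forall>S\<in>set Ss. finite S \<and> S \<subseteq> V"
    using ST by (auto simp: Ss_def)
  ultimately show ?thesis
    by (intro anisotropic_diagonal_monomial_form[OF char2 K] diagonal_form_pfister_tensor_pure_orth)
qed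

theorem lemma4p4:
  fixes F :: "'k::field set" and X Y Z :: "nat \<Rightarrow> 'k" and i n :: nat
  assumes char2: "(2::'k) = 0"
    and K: "rational_function_field F (gens X Y Z) (vars i n)"
    and "1 \<le> i" and "i \<le> n"
  shows "let b = tensor (pfister (map X [1..<i]))
                   (orth (pure_pfister (map Y [i..<Suc n])) (pure_pfister (map Z [i..<Suc n])))
         in sym_nondeg b \<and> anisotropic b \<and> fst b = 2 ^ (n + 1) - 2 ^ i \<and> in_I_pow n b"
proof -
  define g where "g = gens X Y Z"
  define xs where "xs = map VX [1..<i]"
  define ys where "ys = map VY [i..<Suc n]"
  define zs where "zs = map VZ [i..<Suc n]"
  have maps: "map X [1..<i] = map g xs" "map Y [i..<Suc n] = map g ys" "map Z [i..<Suc n] = map g zs"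
    by (simp_all add: g_def xs_def ys_def zs_def gens_def)
  have dist: "distinct (xs @ ys @ zs)"
    by (auto simp: xs_def ys_def zs_def distinct_map inj_on_def)
  have V: "set (xs @ ys @ zs) \<subseteq> vars i n"
    by (auto simp: vars_def xs_def ys_def zs_def)
  have K': "rational_function_field F g (vars i n)"
    using K by (simp add: g_def)
  have nz: "0 \<notin> set (map g xs @ map g ys @ map g zs)"
    using rational_function_field_gen_nonzero[OF K'] V by force
  have lengths: "length xs + 1 = i" "length xs + length ys = n" "length zs = length ys"
    using assms(3,4) by (simp_all add: xs_def ys_def zs_def)
  then have I: "in_I_pow n (pfister_tensor_pure_orth (map g xs) (map g ys) (map g zs))"
    by (intro in_I_pow_pfister_tensor_pure_orth[OF char2 nz]) simp_all
  have "fst (pfister_tensor_pure_orth (map g xs) (map g ys) (map g zs)) = 2 ^ (n + 1) - 2 ^ i"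
    using fst_pfister_tensor_pure_orth[of "map g zs" "map g ys" "map g xs"] lengths
    by (simp only: length_map)
  then show ?thesis
    unfolding Let_def maps pfister_tensor_pure_orth_def[symmetric]
    using sym_nondeg_pfister_tensor_pure_orth[OF nz]
      anisotropic_pfister_tensor_pure_orth_gens[OF char2 K' dist V] I by simp
qed

end
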